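(* There is an algorithm that, given as input a PIA $\mathcal{P}$ and a trajectory $T=\langle (t_0,x_0,y_0),\dots,(t_n,x_n,y_n)\rangle$, returns the stops of $T$ with respect to $\mathcal{P}$, and runs in time $O(n\cdot p)$, where $p$ is the complexity of answering the point query for $\mathcal{P}$.
   Context: A trajectory is a list $\langle (t_0,x_0,y_0),\dots,(t_n,x_n,y_n)\rangle$ of points of $\mathbb{R}^3$ (time, then planar coordinates) with $t_0<t_1<\dots<t_n$ (coordinates may be assumed rational). A place of interest (PoI) is a pair $C=(R_C,\Delta_C)$ where $R_C\subseteq\mathbb{R}^2$ is a topologically closed polygon, polyline or point (the geometry of $C$) and $\Delta_C>0$ is a real number (its minimum duration). A PIA (places of interest of an application) is a finite collection $\mathcal{P}=\{C_1,\dots,C_N\}$ of PoIs with mutually disjoint geometries. A stop of $T$ with respect to $\mathcal{P}$ is a maximal contiguous subtrajectory $\langle (t_i,x_i,y_i),\dots,(t_{i+\ell},x_{i+\ell},y_{i+\ell})\rangle$ of $T$ such that for some $k\in\{1,\dots,N\}$: (a) $(x_{i+j},y_{i+j})\in R_{C_k}$ for all $j=0,\dots,\ell$, and (b) $t_{i+\ell}-t_i>\Delta_{C_k}$. The point query for $\mathcal{P}$ is the problem: given a point $(x,y)\in\mathbb{R}^2$, determine which geometry $R_{C_k}$ of $\mathcal{P}$ (if any) contains $(x,y)$. *)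

theory Defs
  imports "HOL-Analysis.Analysis"
begin

type_synonym point2 = "real \<times> real"
type_synonym traj = "(real \<times> real \<times> real) list"
type_synonym poi = "point2 set \<times> real"              (* (R_C, Delta_C) *)

definition tm :: "real \<times> real \<times> real \<Rightarrow> real" where
  "tm q = fst q"

definition pos :: "real \<times> real \<times> real \<Rightarrow> point2" where
  "pos q = snd q"

definition is_trajectory :: "traj \<Rightarrow> bool" where
  "is_trajectory T \<longleftrightarrow> T \<noteq> [] \<and> sorted_wrt (\<lambda>a b. tm a < tm b) T"

definition polyline_set :: "point2 list \<Rightarrow> point2 set" where
  "polyline_set vs = (\<Union>i < length vs - 1. closed_segment (vs ! i) (vs ! Suc i))"

definition is_polyline :: "point2 set \<Rightarrow> bool" where
  "is_polyline R \<longleftrightarrow> (\<exists>vs. length vs \<ge> 2 \<and> R = polyline_set vs)"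

definition is_polygon :: "point2 set \<Rightarrow> bool" where
  "is_polygon R \<longleftrightarrow> (\<exists>vs g. length vs \<ge> 4 \<and> hd vs = last vs \<and>
      simple_path g \<and> pathfinish g = pathstart g \<and> path_image g = polyline_set vs \<and>
      R = polyline_set vs \<union> inside (polyline_set vs))"

definition is_point_geom :: "point2 set \<Rightarrow> bool" where
  "is_point_geom R \<longleftrightarrow> (\<exists>z. R = {z})"

definition is_poi :: "poi \<Rightarrow> bool" where
  "is_poi C \<longleftrightarrow> closed (fst C) \<and>
     (is_polygon (fst C) \<or> is_polyline (fst C) \<or> is_point_geom (fst C)) \<and> snd C > 0"

definition is_pia :: "poi list \<Rightarrow> bool" where
  "is_pia P \<longleftrightarrow> (\<forall>C \<in> set P. is_poi C) \<and>
     (\<forall>k < length P. \<forall>l < length P. k \<noteq> l \<longrightarrow> fst (P ! k) \<inter> fst (P ! l) = {})"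

definition stop_cond :: "poi list \<Rightarrow> traj \<Rightarrow> nat \<Rightarrow> nat \<Rightarrow> nat \<Rightarrow> bool" where
  "stop_cond P T i j k \<longleftrightarrow> i \<le> j \<and> j < length T \<and> k < length P \<and>
     (\<forall>m \<in> {i..j}. pos (T ! m) \<in> fst (P ! k)) \<and>
     tm (T ! j) - tm (T ! i) > snd (P ! k)"

definition is_stop :: "poi list \<Rightarrow> traj \<Rightarrow> nat \<Rightarrow> nat \<Rightarrow> bool" where
  "is_stop P T i j \<longleftrightarrow> (\<exists>k. stop_cond P T i j k) \<and>
     \<not> (\<exists>i' j' k'. i' \<le> i \<and> j \<le> j' \<and> (i', j') \<noteq> (i, j) \<and> stop_cond P T i' j' k')"

definition point_query_oracle :: "poi list \<Rightarrow> (point2 \<Rightarrow> nat option) \<Rightarrow> bool" where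
  "point_query_oracle P q \<longleftrightarrow> (\<forall>z.
     (\<forall>k. q z = Some k \<longleftrightarrow> (k < length P \<and> z \<in> fst (P ! k))))"

text \<open>The scan algorithm, with explicit cost accounting: each point query costs p,
  every other elementary step costs 1.  State: current candidate (start index,
  start time, PoI index) and the last processed (index, time).\<close>
definition close_cand :: "poi list \<Rightarrow> (nat \<times> real \<times> nat) option \<Rightarrow> nat \<times> real \<Rightarrow> (nat \<times> nat) list" where
  "close_cand P cur lst = (case cur of None \<Rightarrow> []
     | Some (s, ts, k) \<Rightarrow> if snd lst - ts > snd (P ! k) then [(s, fst lst)] else [])"

fun stops_go :: "(point2 \<Rightarrow> nat option) \<Rightarrow> poi list \<Rightarrow> nat \<Rightarrow> nat \<Rightarrow>
    (nat \<times> real \<times> nat) option \<Rightarrow> nat \<times> real \<Rightarrow> traj \<Rightarrow> (nat \<times> nat) list \<times> nat" where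
  "stops_go q P p i cur lst [] = (close_cand P cur lst, 1)"
| "stops_go q P p i cur lst ((t, x, y) # rest) =
     (let r = q (x, y) in
      if cur \<noteq> None \<and> r = Some (snd (snd (the cur))) then
        (let (res, c) = stops_go q P p (Suc i) cur (i, t) rest in (res, c + p + 1))
      else
        (let out = close_cand P cur lst;
             cur' = map_option (\<lambda>k. (i, t, k)) r;
             (res, c) = stops_go q P p (Suc i) cur' (i, t) rest
         in (out @ res, c + p + 2)))"

definition stops_alg :: "(point2 \<Rightarrow> nat option) \<Rightarrow> poi list \<Rightarrow> nat \<Rightarrow> traj \<Rightarrow> (nat \<times> nat) list \<times> nat" where
  "stops_alg q P p T = stops_go q P p 0 None (0, 0) T"

end

theory Submission
  imports Defs
begin

text \<open>Label every point of the trajectory by the answer of the point query. Since the geometries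
  are disjoint and time stamps increase, a stop is exactly a maximal run of consecutive points
  carrying the same label \<open>k\<close> whose duration exceeds \<open>\<Delta>\<^sub>k\<close>: enlarging a run for \<open>k\<close> only
  increases its duration. The algorithm scans the trajectory once, keeping the run through the
  previous point open and reporting it when the label changes; each point costs one point query
  and a constant number of further steps.\<close>

definition long_runs :: "(nat \<Rightarrow> nat option) \<Rightarrow> (nat \<Rightarrow> real) \<Rightarrow> (nat \<Rightarrow> real) \<Rightarrow> nat \<Rightarrow> (nat \<times> nat) set" where
  "long_runs lab tt D n = {(s, e). \<exists>k. s \<le> e \<and> e < n \<and> (\<forall>m\<in>{s..e}. lab m = Some k) \<and>
     (s = 0 \<or> lab (s - 1) \<noteq> Some k) \<and> (Suc e = n \<or> lab (Suc e) \<noteq> Some k) \<and> tt e - tt s > D k}"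

abbreviation traj_runs :: "(point2 \<Rightarrow> nat option) \<Rightarrow> poi list \<Rightarrow> traj \<Rightarrow> (nat \<times> nat) set" where
  "traj_runs q P T \<equiv> long_runs (\<lambda>m. q (pos (T ! m))) (\<lambda>m. tm (T ! m)) (\<lambda>k. snd (P ! k)) (length T)"

lemma stop_cond_iff_labels:
  assumes "point_query_oracle P q"
  shows "stop_cond P T i j k \<longleftrightarrow> i \<le> j \<and> j < length T \<and>
    (\<forall>m\<in>{i..j}. q (pos (T ! m)) = Some k) \<and> tm (T ! j) - tm (T ! i) > snd (P ! k)"
proof -
  have "q z = Some k \<longleftrightarrow> k < length P \<and> z \<in> fst (P ! k)" for z k
    using assms unfolding point_query_oracle_def by blast
  then show ?thesis unfolding stop_cond_def by auto
qed

lemma long_run_is_stop: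
  assumes "point_query_oracle P q" "(s, e) \<in> traj_runs q P T"
  shows "is_stop P T s e"
proof -
  let ?lab = "\<lambda>m. q (pos (T ! m))"
  obtain k where run: "s \<le> e" "e < length T" "\<forall>m\<in>{s..e}. ?lab m = Some k"
      "s = 0 \<or> ?lab (s - 1) \<noteq> Some k" "Suc e = length T \<or> ?lab (Suc e) \<noteq> Some k"
      "tm (T ! e) - tm (T ! s) > snd (P ! k)"
    using assms(2) unfolding long_runs_def by blast
  have "\<not> stop_cond P T i' j' k'" if "i' \<le> s" "e \<le> j'" "(i', j') \<noteq> (s, e)" for i' j' k'
  proof
    assume "stop_cond P T i' j' k'"
    then have j': "j' < length T" and lab': "\<forall>m\<in>{i'..j'}. ?lab m = Some k'"
      using assms(1) by (auto simp: stop_cond_iff_labels)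
    have "k' = k" using lab' run(1,3) that(1,2) by force
    show False
    proof (cases "i' < s")
      case True
      then have "s - 1 \<in> {i'..j'}" using that(2) run(1) by auto
      then have "?lab (s - 1) = Some k" using lab' \<open>k' = k\<close> by blast
      with True run(4) show False by simp
    next
      case False
      then have "e < j'" using that by auto
      then have "?lab (Suc e) = Some k" "Suc e \<noteq> length T"
        using lab' \<open>k' = k\<close> that(1) run(1) j' by auto
      with run(5) show False by simp
    qed
  qed
  moreover have "stop_cond P T s e k"
    using assms(1) run by (simp add: stop_cond_iff_labels)
  ultimately show ?thesis unfolding is_stop_def by blast
qed

lemma stop_is_long_run:
  assumes "is_trajectory T" "point_query_oracle P q" "is_stop P T s e"
  shows "(s, e) \<in> traj_runs q P T"
proof -
  let ?lab = "\<lambda>m. q (pos (T ! m))"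
  obtain k where stop: "stop_cond P T s e k"
    and maximal: "\<And>i' j' k'. i' \<le> s \<Longrightarrow> e \<le> j' \<Longrightarrow> (i', j') \<noteq> (s, e) \<Longrightarrow> \<not> stop_cond P T i' j' k'"
    using assms(3) unfolding is_stop_def by blast
  have run: "s \<le> e" "e < length T" "\<forall>m\<in>{s..e}. ?lab m = Some k"
      "tm (T ! e) - tm (T ! s) > snd (P ! k)"
    using stop assms(2) by (simp_all add: stop_cond_iff_labels)
  have tm_mono: "tm (T ! a) < tm (T ! b)" if "a < b" "b < length T" for a b
    using assms(1) that unfolding is_trajectory_def by (metis sorted_wrt_nth_less)
  have "s = 0 \<or> ?lab (s - 1) \<noteq> Some k"
  proof (rule ccontr)
    assume "\<not> ?thesis"
    then have "0 < s" "?lab (s - 1) = Some k" by auto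
    moreover have "{s - 1..e} = insert (s - 1) {s..e}" using \<open>0 < s\<close> run(1) by auto
    ultimately have "\<forall>m\<in>{s - 1..e}. ?lab m = Some k" using run(3) by simp
    moreover have "tm (T ! (s - 1)) < tm (T ! s)"
      using tm_mono \<open>0 < s\<close> run(1,2) by simp
    ultimately have "stop_cond P T (s - 1) e k"
      using assms(2) run by (simp add: stop_cond_iff_labels)
    with maximal[of "s - 1" e k] \<open>0 < s\<close> show False by simp
  qed
  moreover have "Suc e = length T \<or> ?lab (Suc e) \<noteq> Some k"
  proof (rule ccontr)
    assume "\<not> ?thesis"
    then have "Suc e < length T" "\<forall>m\<in>{s..Suc e}. ?lab m = Some k"
      using run(2,3) by (auto simp: le_Suc_eq)
    moreover have "tm (T ! e) < tm (T ! Suc e)"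
      using tm_mono \<open>Suc e < length T\<close> by simp
    ultimately have "stop_cond P T s (Suc e) k"
      using assms(2) run by (simp add: stop_cond_iff_labels)
    with maximal[of s "Suc e" k] show False by simp
  qed
  ultimately show ?thesis unfolding long_runs_def using run by blast
qed

lemma long_runs_starting_at:
  assumes "s < i" "i \<le> n" "\<forall>m\<in>{s..<i}. lab m = Some k" "s = 0 \<or> lab (s - 1) \<noteq> Some k"
    "i = n \<or> lab i \<noteq> Some k"
  shows "{(s', e) \<in> long_runs lab tt D n. s' = s} = (if tt (i - 1) - tt s > D k then {(s, i - 1)} else {})"
proof -
  have "(s, e) \<in> long_runs lab tt D n \<longleftrightarrow> e = i - 1 \<and> tt (i - 1) - tt s > D k" for e
  proof
    assume "(s, e) \<in> long_runs lab tt D n"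
    then obtain k' where run: "s \<le> e" "e < n" "\<forall>m\<in>{s..e}. lab m = Some k'"
      "Suc e = n \<or> lab (Suc e) \<noteq> Some k'" "tt e - tt s > D k'"
      unfolding long_runs_def by blast
    have "k' = k" using run(1,3) assms(1,3) by force
    have "e = i - 1"
    proof (rule linorder_cases)
      assume "e < i - 1"
      then have "lab (Suc e) = Some k" "Suc e \<noteq> n" using assms(2,3) run(1) by auto
      with run(4) \<open>k' = k\<close> show ?thesis by simp
    next
      assume "e > i - 1"
      then have "lab i = Some k" "i \<noteq> n" using run(2,3) \<open>k' = k\<close> assms(1) by auto
      with assms(5) show ?thesis by simp
    qed
    with run(5) \<open>k' = k\<close> show "e = i - 1 \<and> tt (i - 1) - tt s > D k" by simp
  next
    assume "e = i - 1 \<and> tt (i - 1) - tt s > D k"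
    moreover have "Suc (i - 1) = i" using assms(1) by simp
    ultimately show "(s, e) \<in> long_runs lab tt D n"
      unfolding long_runs_def using assms by (auto intro!: exI[of _ k])
  qed
  then show ?thesis by auto
qed

lemma no_long_runs_starting_at:
  assumes "\<And>k. lab i = Some k \<Longrightarrow> 0 < i \<and> lab (i - 1) = Some k"
  shows "{(s, e) \<in> long_runs lab tt D n. s = i} = {}"
  using assms unfolding long_runs_def by fastforce

text \<open>Invariant of the scan before point \<open>i\<close>: \<open>cur\<close> is the maximal run of equal labels
  ending at \<open>i - 1\<close>, together with its start time, or \<open>None\<close> if point \<open>i - 1\<close> has no label.\<close>
definition open_run :: "(nat \<Rightarrow> nat option) \<Rightarrow> (nat \<Rightarrow> real) \<Rightarrow> nat \<Rightarrow> (nat \<times> real \<times> nat) option \<Rightarrow> bool" where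
  "open_run lab tt i cur \<longleftrightarrow> (case cur of
      None \<Rightarrow> i = 0 \<or> lab (i - 1) = None
    | Some (s, ts, k) \<Rightarrow> s < i \<and> ts = tt s \<and> (\<forall>m\<in>{s..<i}. lab m = Some k) \<and> (s = 0 \<or> lab (s - 1) \<noteq> Some k))"

definition runs_from_open :: "(nat \<times> nat) set \<Rightarrow> (nat \<times> real \<times> nat) option \<Rightarrow> (nat \<times> nat) set" where
  "runs_from_open R cur = (case cur of None \<Rightarrow> {} | Some (s, _, _) \<Rightarrow> {(s', e) \<in> R. s' = s})"

lemma set_close_cand:
  assumes "open_run lab tt i cur" "i \<le> n" "\<And>s ts k. cur = Some (s, ts, k) \<Longrightarrow> i = n \<or> lab i \<noteq> Some k"
    "0 < i \<Longrightarrow> lst = (i - 1, tt (i - 1))"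
  shows "set (close_cand P cur lst) = runs_from_open (long_runs lab tt (\<lambda>k. snd (P ! k)) n) cur"
proof (cases cur)
  case None
  then show ?thesis by (simp add: close_cand_def runs_from_open_def)
next
  case (Some c)
  then obtain s ts k where cur: "cur = Some (s, ts, k)" by (cases c) auto
  then have run: "s < i" "ts = tt s" "\<forall>m\<in>{s..<i}. lab m = Some k" "s = 0 \<or> lab (s - 1) \<noteq> Some k"
    using assms(1) by (auto simp: open_run_def)
  have "{(s', e) \<in> long_runs lab tt (\<lambda>k. snd (P ! k)) n. s' = s}
      = (if tt (i - 1) - ts > snd (P ! k) then {(s, i - 1)} else {})"
    using long_runs_starting_at[OF run(1) assms(2) run(3,4) assms(3)[OF cur]] run(2) by simp
  then show ?thesis using cur assms(4) run(1) by (simp add: close_cand_def runs_from_open_def)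
qed

lemma drop_eq_ConsD:
  assumes "drop i xs = a # rest"
  shows "i < length xs" "xs ! i = a" "drop (Suc i) xs = rest"
  using assms by (metis Cons_nth_drop_Suc drop_all list.distinct(1) list.inject not_le)+

lemma set_stops_go:
  fixes T :: traj and q :: "point2 \<Rightarrow> nat option" and P :: "poi list"
  defines "lab \<equiv> \<lambda>m. q (pos (T ! m))" and "tt \<equiv> \<lambda>m. tm (T ! m)"
    and "R \<equiv> traj_runs q P T"
  assumes "drop i T = rest" "i \<le> length T" "open_run lab tt i cur" "0 < i \<Longrightarrow> lst = (i - 1, tt (i - 1))"
  shows "set (fst (stops_go q P p i cur lst rest)) = {(s, e) \<in> R. i \<le> s} \<union> runs_from_open R cur"
  using assms(4-)
proof (induction rest arbitrary: i cur lst)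
  case Nil
  then have "i = length T" by simp
  then have "{(s, e) \<in> R. i \<le> s} = {}" unfolding R_def long_runs_def by auto
  moreover have "set (close_cand P cur lst) = runs_from_open R cur"
    unfolding R_def by (rule set_close_cand) (use Nil \<open>i = length T\<close> in \<open>auto simp: lab_def tt_def\<close>)
  ultimately show ?case by auto
next
  case (Cons a rest)
  obtain t x y where a: "a = (t, x, y)" by (cases a) auto
  have "i < length T" and Ti: "T ! i = (t, x, y)" and rest: "drop (Suc i) T = rest"
    using drop_eq_ConsD[OF Cons.prems(1)] a by auto
  have lab_i: "lab i = q (x, y)" and tt_i: "tt i = t"
    by (simp_all add: lab_def tt_def Ti pos_def tm_def)
  note IH = Cons.IH[OF rest, of _ "(i, t)"]
  show ?case
  proof (cases "cur \<noteq> None \<and> q (x, y) = Some (snd (snd (the cur)))")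
    case True
    then obtain s ts k where cur: "cur = Some (s, ts, k)" and "q (x, y) = Some k" by auto
    then have "open_run lab tt (Suc i) cur" "lab (i - 1) = Some k" "0 < i"
      using Cons.prems(3) lab_i by (auto simp: open_run_def less_Suc_eq)
    then have "{(s, e) \<in> R. s = i} = {}"
      unfolding R_def using lab_i \<open>q (x, y) = Some k\<close>
      by (intro no_long_runs_starting_at) (simp add: lab_def)
    then have "{(s, e) \<in> R. i \<le> s} = {(s, e) \<in> R. Suc i \<le> s}" by (auto simp: le_eq_less_or_eq)
    moreover have "set (fst (stops_go q P p (Suc i) cur (i, t) rest))
        = {(s, e) \<in> R. Suc i \<le> s} \<union> runs_from_open R cur"
      using IH \<open>open_run lab tt (Suc i) cur\<close> \<open>i < length T\<close> tt_i by simp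
    moreover have "fst (stops_go q P p i cur lst (a # rest)) = fst (stops_go q P p (Suc i) cur (i, t) rest)"
      unfolding a stops_go.simps Let_def if_P[OF True] by (simp add: case_prod_beta)
    ultimately show ?thesis by simp
  next
    case False
    define cur' where "cur' = map_option (\<lambda>k. (i, t, k)) (q (x, y))"
    have "open_run lab tt (Suc i) cur'"
    proof (cases "q (x, y)")
      case None
      then show ?thesis using lab_i by (simp add: cur'_def open_run_def)
    next
      case (Some k)
      have "i = 0 \<or> lab (i - 1) \<noteq> Some k"
        using Cons.prems(3) False Some by (cases cur) (auto simp: open_run_def)
      then show ?thesis using Some lab_i tt_i by (auto simp: cur'_def open_run_def less_Suc_eq_le)
    qed
    then have "set (fst (stops_go q P p (Suc i) cur' (i, t) rest))
        = {(s, e) \<in> R. Suc i \<le> s} \<union> runs_from_open R cur'"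
      using IH \<open>i < length T\<close> tt_i by simp
    moreover have "runs_from_open R cur' = {(s, e) \<in> R. s = i}"
    proof (cases "q (x, y)")
      case None
      then have "{(s, e) \<in> R. s = i} = {}"
        unfolding R_def using lab_i by (intro no_long_runs_starting_at) (simp add: lab_def)
      with None show ?thesis by (simp add: cur'_def runs_from_open_def)
    qed (simp add: cur'_def runs_from_open_def)
    moreover have "set (close_cand P cur lst) = runs_from_open R cur"
      unfolding R_def using Cons.prems(3,4) False lab_i \<open>i < length T\<close>
      by (intro set_close_cand) (auto simp: lab_def tt_def)
    moreover have "{(s, e) \<in> R. i \<le> s} = {(s, e) \<in> R. Suc i \<le> s} \<union> {(s, e) \<in> R. s = i}"
      by auto
    moreover have "set (fst (stops_go q P p i cur lst (a # rest)))
        = set (close_cand P cur lst) \<union> set (fst (stops_go q P p (Suc i) cur' (i, t) rest))"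
      unfolding a stops_go.simps Let_def if_not_P[OF False] cur'_def by (simp add: case_prod_beta)
    ultimately show ?thesis by auto
  qed
qed

lemma stops_go_cost: "snd (stops_go q P p i cur lst rest) \<le> length rest * (p + 2) + 1"
  by (induction q P p i cur lst rest rule: stops_go.induct) (auto simp: Let_def split: prod.splits)

lemma set_stops_alg:
  assumes "is_trajectory T" "point_query_oracle P q"
  shows "set (fst (stops_alg q P p T)) = {(i, j). is_stop P T i j}"
proof -
  have "set (fst (stops_alg q P p T)) = traj_runs q P T"
    unfolding stops_alg_def by (subst set_stops_go) (auto simp: open_run_def runs_from_open_def)
  also have "\<dots> = {(i, j). is_stop P T i j}"
    using long_run_is_stop stop_is_long_run assms by blast
  finally show ?thesis .
qed

lemma stops_alg_cost:
  assumes "is_trajectory T" "1 \<le> p"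
  shows "snd (stops_alg q P p T) \<le> 4 * length T * p"
proof -
  have "1 \<le> length T" using assms(1) unfolding is_trajectory_def by (cases T) auto
  then have "length T \<le> length T * p" "1 \<le> length T * p" using assms(2) by simp_all
  have "snd (stops_alg q P p T) \<le> length T * (p + 2) + 1"
    unfolding stops_alg_def by (rule stops_go_cost)
  also have "\<dots> = length T * p + 2 * length T + 1" by (simp add: algebra_simps)
  also have "\<dots> \<le> length T * p + 2 * (length T * p) + length T * p"
    using \<open>length T \<le> length T * p\<close> \<open>1 \<le> length T * p\<close> by linarith
  finally show ?thesis by (simp add: mult.commute mult.left_commute)
qed

theorem proposition2:
  "\<exists>c::nat. \<forall>(P::poi list) (T::traj) (q::point2 \<Rightarrow> nat option) (p::nat).
     is_pia P \<and> is_trajectory T \<and> point_query_oracle P q \<and> p \<ge> 1 \<longrightarrow>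
       set (fst (stops_alg q P p T)) = {(i, j). is_stop P T i j} \<and>
       snd (stops_alg q P p T) \<le> c * length T * p"
  using set_stops_alg stops_alg_cost by blast

end
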